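(* Let $\omega$ be the automorphism of $\mathcal A_\theta^{alg}$ with $U_1\mapsto U_2^{-1}$, $U_2\mapsto\lambda^{-1/2}U_1U_2^{-1}$, and let $H^0(\mathcal A_\theta^{alg},{}_{\omega}\mathcal A_\theta^{alg\ast})$ be the space of formal series $\varphi=\sum\varphi_{n,m}U_1^nU_2^m$ with $(\omega\cdot a)\varphi=\varphi a$ for all $a\in\mathcal A_\theta^{alg}$. Let $\mathbb Z_6$ be generated by the automorphism $-\omega$ with $U_1\mapsto U_2$, $U_2\mapsto\lambda^{-1/2}U_1^{-1}U_2$, acting termwise on this space. Then $H^0(\mathcal A_\theta^{alg},{}_{\omega}\mathcal A_\theta^{alg\ast})^{\mathbb Z_6}\cong\mathbb C^2$.
   Context: Let $\theta\in\mathbb R\setminus\mathbb Q$, $\lambda=e^{2\pi i\theta}$, $\lambda^s:=e^{2\pi i\theta s}$. $\mathcal A_\theta^{alg}$ is the complex algebra of finite sums $\sum a_{n,m}U_1^nU_2^m$ with $U_1,U_2$ invertible and $U_2U_1=\lambda U_1U_2$; formal series $\sum_{(n,m)\in\mathbb Z^2}\varphi_{n,m}U_1^nU_2^m$ with arbitrary coefficients form an $\mathcal A_\theta^{alg}$-bimodule via multiplication. Termwise action of an automorphism $h$: $h\cdot\sum\varphi_{n,m}U_1^nU_2^m=\sum\varphi_{n,m}\,h\cdot(U_1^nU_2^m)$. *)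

theory Defs
  imports Complex_Main
begin

definition lam :: "real \<Rightarrow> real \<Rightarrow> complex" where
  "lam th s = exp (2 * of_real pi * \<i> * of_real th * of_real s)"

text \<open>A scalar multiple of a monomial c U1^a U2^b is encoded as (c, a, b).
  Product uses U2 U1 = lambda U1 U2, hence U1^a U2^b U1^p U2^q = lambda^(b p) U1^(a+p) U2^(b+q).\<close>
type_synonym mono = "complex \<times> int \<times> int"

definition mmul :: "real \<Rightarrow> mono \<Rightarrow> mono \<Rightarrow> mono" where
  "mmul th x y = (case x of (c, a, b) \<Rightarrow> case y of (d, p, q) \<Rightarrow>
      (c * d * lam th (of_int (b * p)), a + p, b + q))"

definition minv :: "real \<Rightarrow> mono \<Rightarrow> mono" where
  "minv th x = (case x of (c, a, b) \<Rightarrow> (inverse c * lam th (of_int (a * b)), - a, - b))"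

definition mpow :: "real \<Rightarrow> mono \<Rightarrow> int \<Rightarrow> mono" where
  "mpow th x k = (if 0 \<le> k then (mmul th x ^^ nat k) (1, 0, 0)
                  else (mmul th (minv th x) ^^ nat (- k)) (1, 0, 0))"

text \<open>Image of U1^n U2^m under the automorphism with U1 \<mapsto> u1, U2 \<mapsto> u2.\<close>
definition hmono :: "real \<Rightarrow> mono \<Rightarrow> mono \<Rightarrow> int \<times> int \<Rightarrow> mono" where
  "hmono th u1 u2 nm = mmul th (mpow th u1 (fst nm)) (mpow th u2 (snd nm))"

text \<open>Termwise action on formal series (coefficient functions Z^2 -> C):
  h . sum phi_nm U1^n U2^m = sum phi_nm h(U1^n U2^m).\<close>
definition act :: "real \<Rightarrow> mono \<Rightarrow> mono \<Rightarrow> (int \<times> int \<Rightarrow> complex) \<Rightarrow> (int \<times> int \<Rightarrow> complex)" where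
  "act th u1 u2 phi kl = (\<Sum>x \<in> {x. snd (hmono th u1 u2 x) = kl}. phi x * fst (hmono th u1 u2 x))"

text \<open>Left multiplication of a formal series by a finite sum a (finitely supported), and right multiplication.\<close>
definition lmul :: "real \<Rightarrow> (int \<times> int \<Rightarrow> complex) \<Rightarrow> (int \<times> int \<Rightarrow> complex) \<Rightarrow> (int \<times> int \<Rightarrow> complex)" where
  "lmul th a phi kl = (\<Sum>nm \<in> {x. a x \<noteq> 0}.
      a nm * lam th (of_int (snd nm * (fst kl - fst nm))) * phi (fst kl - fst nm, snd kl - snd nm))"

definition rmul :: "real \<Rightarrow> (int \<times> int \<Rightarrow> complex) \<Rightarrow> (int \<times> int \<Rightarrow> complex) \<Rightarrow> (int \<times> int \<Rightarrow> complex)" where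
  "rmul th phi a kl = (\<Sum>pq \<in> {x. a x \<noteq> 0}.
      phi (fst kl - fst pq, snd kl - snd pq) * a pq * lam th (of_int ((snd kl - snd pq) * fst pq)))"

definition omega1 :: mono where "omega1 = (1, 0, -1)"
definition omega2 :: "real \<Rightarrow> mono" where "omega2 th = (lam th (-1/2), 1, -1)"

definition g1 :: mono where "g1 = (1, 0, 1)"
definition g2 :: "real \<Rightarrow> mono" where "g2 th = (lam th (-1/2), -1, 1)"

definition H0 :: "real \<Rightarrow> (int \<times> int \<Rightarrow> complex) set" where
  "H0 th = {phi. \<forall>a. finite {x. a x \<noteq> 0} \<longrightarrow>
      lmul th (act th omega1 (omega2 th) a) phi = rmul th phi a}"

definition H0_inv :: "real \<Rightarrow> (int \<times> int \<Rightarrow> complex) set" where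
  "H0_inv th = {phi \<in> H0 th. \<forall>k::nat. (act th g1 (g2 th) ^^ k) phi = phi}"

end

theory Submission
  imports Defs
begin

text \<open>Writing \<open>\<phi>(k, l) = \<lambda>^Q(k, l) \<psi>(k, l)\<close> with \<open>Q(k, l) = (k\<^sup>2 + 4 k l + l\<^sup>2) / 6\<close> removes every
  phase from the problem. Tested on the monomials \<open>U\<^sub>1^p U\<^sub>2^q\<close>, the \<open>\<omega>\<close>-twisted trace condition
  says exactly that \<open>\<psi>\<close> is invariant under the translations \<open>(p - q, p + 2 q)\<close>, which span the
  index-3 lattice \<open>{(a, b). 3 dvd b - a}\<close>; and \<open>-\<omega>\<close> acts on \<open>\<psi>\<close> through the substitution
  \<open>(k, l) \<mapsto> (l + k, -k)\<close>, which fixes the class \<open>l - k \<equiv> 0\<close> and swaps the other two classes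
  mod 3. So an invariant \<open>\<psi>\<close> is determined by two values.\<close>

lemma lam_add: "lam th (s + t) = lam th s * lam th t"
  unfolding lam_def by (simp add: exp_add[symmetric] algebra_simps)

lemma lam_0 [simp]: "lam th 0 = 1"
  unfolding lam_def by simp

lemma lam_nonzero [simp]: "lam th s \<noteq> 0"
  unfolding lam_def by simp

lemma inverse_lam: "inverse (lam th s) = lam th (- s)"
  by (metis add.right_inverse lam_0 lam_add inverse_unique)

lemma funpow_mmul_lam:
  "(mmul th (lam th s, a, b) ^^ n) (1, 0, 0) =
     (lam th (s * real n + of_int a * of_int b * real n * (real n - 1) / 2), int n * a, int n * b)"
proof (induction n)
  case (Suc n)
  have "lam th s * lam th (s * real n + of_int a * of_int b * real n * (real n - 1) / 2)
          * lam th (of_int (b * (int n * a)))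
        = lam th (s * real (Suc n) + of_int a * of_int b * real (Suc n) * (real (Suc n) - 1) / 2)"
    unfolding lam_add[symmetric] by (rule arg_cong[where f = "lam th"]) (simp add: field_simps)
  with Suc show ?case by (simp add: mmul_def algebra_simps)
qed simp

lemma mpow_lam:
  "mpow th (lam th s, a, b) n =
     (lam th (s * of_int n + of_int a * of_int b * of_int n * (of_int n - 1) / 2), n * a, n * b)"
proof (cases "0 \<le> n")
  case False
  have "minv th (lam th s, a, b) = (lam th (- s + of_int (a * b)), - a, - b)"
    by (simp add: minv_def inverse_lam lam_add[symmetric])
  moreover have "lam th ((- s + of_int (a * b)) * real (nat (- n))
      + of_int (- a) * of_int (- b) * real (nat (- n)) * (real (nat (- n)) - 1) / 2)
    = lam th (s * of_int n + of_int a * of_int b * of_int n * (of_int n - 1) / 2)"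
    using False by (intro arg_cong[where f = "lam th"]) (simp add: field_simps)
  ultimately show ?thesis
    using False by (simp add: mpow_def funpow_mmul_lam)
qed (simp add: mpow_def funpow_mmul_lam)

lemma hmono_omega:
  "hmono th omega1 (omega2 th) (n, m) = (lam th (- (of_int m * of_int m) / 2 - of_int n * of_int m), m, - n - m)"
proof -
  have omega1: "omega1 = (lam th 0, 0, -1)" by (simp add: omega1_def)
  show ?thesis
    unfolding hmono_def omega1 omega2_def mpow_lam
    by (simp add: mmul_def lam_add[symmetric]) (rule arg_cong[where f = "lam th"], simp add: field_simps)
qed

lemma hmono_g:
  "hmono th g1 (g2 th) (n, m) = (lam th (- (of_int m * of_int m) / 2 - of_int n * of_int m), - m, n + m)"
proof -
  have g1: "g1 = (lam th 0, 0, 1)" by (simp add: g1_def)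
  show ?thesis
    unfolding hmono_def g1 g2_def mpow_lam
    by (simp add: mmul_def lam_add[symmetric]) (rule arg_cong[where f = "lam th"], simp add: field_simps)
qed

lemma act_omega:
  "act th omega1 (omega2 th) phi (k, l) =
     phi (- k - l, k) * lam th (- (of_int k * of_int k) / 2 - of_int (- k - l) * of_int k)"
proof -
  have "{x. snd (hmono th omega1 (omega2 th) x) = (k, l)} = {(- k - l, k)}"
    by (auto simp: hmono_omega)
  then show ?thesis
    unfolding act_def by (simp add: hmono_omega)
qed

lemma act_g:
  "act th g1 (g2 th) phi (k, l) =
     phi (l + k, - k) * lam th (- (of_int (- k) * of_int (- k)) / 2 - of_int (l + k) * of_int (- k))"
proof -
  have "{x. snd (hmono th g1 (g2 th) x) = (k, l)} = {(l + k, - k)}"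
    by (auto simp: hmono_g)
  then show ?thesis
    unfolding act_def by (simp add: hmono_g)
qed

lemma lmul_act_omega:
  "lmul th (act th omega1 (omega2 th) a) phi (k, l) =
     (\<Sum>(p, q)\<in>{x. a x \<noteq> 0}. a (p, q) * lam th (- (of_int q * of_int q) / 2 - of_int p * of_int q)
        * lam th (of_int ((- p - q) * (k - q))) * phi (k - q, l + p + q))"
  unfolding lmul_def
  by (rule sym, rule sum.reindex_bij_witness[where j = "\<lambda>(p, q). (q, - p - q)"
        and i = "\<lambda>(n, m). (- n - m, n)"])
    (auto simp: act_omega algebra_simps)

definition quad_phase :: "int \<Rightarrow> int \<Rightarrow> real" where
  "quad_phase k l = (of_int k * of_int k + 4 * of_int k * of_int l + of_int l * of_int l) / 6"

definition untwist :: "real \<Rightarrow> (int \<times> int \<Rightarrow> complex) \<Rightarrow> int \<times> int \<Rightarrow> complex" where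
  "untwist th phi x = phi x * lam th (- quad_phase (fst x) (snd x))"

lemma eq_lam_quad_phase_untwist: "phi (k, l) = lam th (quad_phase k l) * untwist th phi (k, l)"
  unfolding untwist_def by (simp add: inverse_lam[symmetric])

lemma lam_quad_phase_omega:
  "lam th (- (of_int q * of_int q) / 2 - of_int p * of_int q) * lam th (of_int ((- p - q) * (k - q)))
     * lam th (quad_phase (k - q) (l + p + q))
   = lam th (quad_phase (k - p) (l - q)) * lam th (of_int ((l - q) * p))"
  unfolding lam_add[symmetric] quad_phase_def
  by (rule arg_cong[where f = "lam th"]) (simp add: field_simps)

lemma lam_quad_phase_g:
  "lam th (quad_phase (l + k) (- k)) * lam th (- (of_int (- k) * of_int (- k)) / 2 - of_int (l + k) * of_int (- k))
     = lam th (quad_phase k l)"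
  unfolding lam_add[symmetric] quad_phase_def
  by (rule arg_cong[where f = "lam th"]) (simp add: field_simps)

lemma omega_equation_iff_untwist:
  "lam th (- (of_int q * of_int q) / 2 - of_int p * of_int q) * lam th (of_int ((- p - q) * (k - q)))
     * phi (k - q, l + p + q) = phi (k - p, l - q) * lam th (of_int ((l - q) * p))
   \<longleftrightarrow> untwist th phi (k - q, l + p + q) = untwist th phi (k - p, l - q)"
proof -
  let ?c = "lam th (quad_phase (k - p) (l - q)) * lam th (of_int ((l - q) * p))"
  have "lam th (- (of_int q * of_int q) / 2 - of_int p * of_int q) * lam th (of_int ((- p - q) * (k - q)))
          * phi (k - q, l + p + q) = ?c * untwist th phi (k - q, l + p + q)"
    by (subst eq_lam_quad_phase_untwist[where th = th and k = "k - q"],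
        simp only: mult.assoc[symmetric] lam_quad_phase_omega)
  moreover have "phi (k - p, l - q) * lam th (of_int ((l - q) * p)) = ?c * untwist th phi (k - p, l - q)"
    by (subst eq_lam_quad_phase_untwist[where th = th and k = "k - p"], simp only: mult_ac)
  ultimately show ?thesis
    by simp
qed

lemma g_fixed_iff_untwist:
  "act th g1 (g2 th) phi = phi \<longleftrightarrow> (\<forall>k l. untwist th phi (l + k, - k) = untwist th phi (k, l))"
proof -
  have "act th g1 (g2 th) phi (k, l) = lam th (quad_phase k l) * untwist th phi (l + k, - k)" for k l
    by (subst act_g, subst eq_lam_quad_phase_untwist[where th = th and k = "l + k"],
        simp only: mult_ac lam_quad_phase_g[of th l k, symmetric])
  moreover have "phi (k, l) = lam th (quad_phase k l) * untwist th phi (k, l)" for k l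
    by (rule eq_lam_quad_phase_untwist)
  ultimately show ?thesis
    by (simp add: fun_eq_iff)
qed

lemma mem_H0_iff_untwist:
  "phi \<in> H0 th \<longleftrightarrow> (\<forall>k l p q. untwist th phi (k - q, l + p + q) = untwist th phi (k - p, l - q))"
proof
  assume H0: "phi \<in> H0 th"
  show "\<forall>k l p q. untwist th phi (k - q, l + p + q) = untwist th phi (k - p, l - q)"
  proof (intro allI)
    fix k l p q :: int
    define a :: "int \<times> int \<Rightarrow> complex" where "a = (\<lambda>x. if x = (p, q) then 1 else 0)"
    have supp: "{x. a x \<noteq> 0} = {(p, q)}"
      by (auto simp: a_def)
    then have "lmul th (act th omega1 (omega2 th) a) phi (k, l) = rmul th phi a (k, l)"
      using H0 by (simp add: H0_def)
    then show "untwist th phi (k - q, l + p + q) = untwist th phi (k - p, l - q)"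
      unfolding lmul_act_omega rmul_def supp by (simp add: a_def flip: omega_equation_iff_untwist)
  qed
next
  assume "\<forall>k l p q. untwist th phi (k - q, l + p + q) = untwist th phi (k - p, l - q)"
  then have eq: "lam th (- (of_int q * of_int q) / 2 - of_int p * of_int q) * lam th (of_int ((- p - q) * (k - q)))
      * phi (k - q, l + p + q) = phi (k - p, l - q) * lam th (of_int ((l - q) * p))" for k l p q
    unfolding omega_equation_iff_untwist by blast
  have "a (p, q) * lam th (- (of_int q * of_int q) / 2 - of_int p * of_int q) * lam th (of_int ((- p - q) * (k - q)))
      * phi (k - q, l + p + q) = phi (k - p, l - q) * a (p, q) * lam th (of_int ((l - q) * p))"
    for a :: "int \<times> int \<Rightarrow> complex" and k l p q
    using arg_cong[OF eq[of q p k l], of "\<lambda>z. a (p, q) * z"] by (simp only: mult_ac)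
  then have "lmul th (act th omega1 (omega2 th) a) phi (k, l) = rmul th phi a (k, l)" for a k l
    unfolding lmul_act_omega rmul_def
    by (intro sum.cong refl) (simp only: split_paired_all prod.case fst_conv snd_conv)
  then show "phi \<in> H0 th"
    by (auto simp: H0_def fun_eq_iff)
qed

lemma shift_invariant_iff_mod3:
  fixes psi :: "int \<times> int \<Rightarrow> 'a"
  shows "(\<forall>k l p q. psi (k - q, l + p + q) = psi (k - p, l - q)) \<longleftrightarrow> (\<forall>k l. psi (k, l) = psi (0, (l - k) mod 3))"
proof
  assume inv: "\<forall>k l p q. psi (k - q, l + p + q) = psi (k - p, l - q)"
  show "\<forall>k l. psi (k, l) = psi (0, (l - k) mod 3)"
  proof (intro allI)
    fix k l :: int
    define d r where "d = (l - k) div 3" and "r = (l - k) mod 3"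
    have "l = (r + d) + (k + d) + d"
      by (simp add: d_def r_def)
    then have "psi (k, l) = psi ((k + d) - d, (r + d) + (k + d) + d)"
      by simp
    also have "\<dots> = psi ((k + d) - (k + d), (r + d) - d)"
      using inv by blast
    finally show "psi (k, l) = psi (0, (l - k) mod 3)"
      by (simp add: r_def)
  qed
next
  assume "\<forall>k l. psi (k, l) = psi (0, (l - k) mod 3)"
  moreover have "(l + p + q - (k - q)) mod 3 = (l - q - (k - p)) mod (3::int)" for k l p q
  proof -
    have "l + p + q - (k - q) = (l - q - (k - p)) + 3 * q" by simp
    then show ?thesis by (simp only: mod_mult_self2)
  qed
  ultimately show "\<forall>k l p q. psi (k - q, l + p + q) = psi (k - p, l - q)"
    by metis
qed

lemma mod3_rotation_invariant_iff:
  fixes psi :: "int \<times> int \<Rightarrow> 'a"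
  shows "(\<forall>k l. psi (k, l) = psi (0, (l - k) mod 3)) \<and> (\<forall>k l. psi (l + k, - k) = psi (k, l)) \<longleftrightarrow>
    (\<forall>k l. psi (k, l) = (if 3 dvd (l - k) then psi (0, 0) else psi (0, 1)))"
proof
  assume "(\<forall>k l. psi (k, l) = psi (0, (l - k) mod 3)) \<and> (\<forall>k l. psi (l + k, - k) = psi (k, l))"
  then have mod3: "\<And>k l. psi (k, l) = psi (0, (l - k) mod 3)" and rot: "\<And>k l. psi (l + k, - k) = psi (k, l)"
    by blast+
  have "psi (0, 2) = psi (0, 1)"
    using rot[where k = 0 and l = 2] mod3[of 2 0] by simp
  show "\<forall>k l. psi (k, l) = (if 3 dvd (l - k) then psi (0, 0) else psi (0, 1))"
  proof (intro allI)
    fix k l :: int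
    have "(l - k) mod 3 = 0 \<or> (l - k) mod 3 = 1 \<or> (l - k) mod 3 = 2"
      by presburger
    then consider "(l - k) mod 3 = 0" | "(l - k) mod 3 = 1" | "(l - k) mod 3 = 2"
      by blast
    then show "psi (k, l) = (if 3 dvd (l - k) then psi (0, 0) else psi (0, 1))"
      using mod3[of k l] \<open>psi (0, 2) = psi (0, 1)\<close> by cases (simp_all add: dvd_eq_mod_eq_0)
  qed
next
  assume const: "\<forall>k l. psi (k, l) = (if 3 dvd (l - k) then psi (0, 0) else psi (0, 1))"
  have "3 dvd ((l - k) mod 3) \<longleftrightarrow> 3 dvd (l - k)" and "3 dvd (- k - (l + k)) \<longleftrightarrow> 3 dvd (l - k)"
    for k l :: int
    by presburger+
  with const show "(\<forall>k l. psi (k, l) = psi (0, (l - k) mod 3)) \<and> (\<forall>k l. psi (l + k, - k) = psi (k, l))"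
    by simp
qed

lemma funpow_fixed_iff: "(\<forall>n. (f ^^ n) x = x) \<longleftrightarrow> f x = x"
proof
  assume "f x = x"
  show "\<forall>n. (f ^^ n) x = x"
  proof
    show "(f ^^ n) x = x" for n
      by (induction n) (simp_all add: \<open>f x = x\<close>)
  qed
qed (metis funpow_0 funpow_Suc_right comp_apply)

lemma mem_H0_inv_iff_untwist:
  "phi \<in> H0_inv th \<longleftrightarrow>
     (\<forall>k l. untwist th phi (k, l) = (if 3 dvd (l - k) then untwist th phi (0, 0) else untwist th phi (0, 1)))"
  unfolding H0_inv_def mem_Collect_eq mem_H0_iff_untwist shift_invariant_iff_mod3 funpow_fixed_iff
    g_fixed_iff_untwist mod3_rotation_invariant_iff ..

definition invariant_series :: "real \<Rightarrow> complex \<times> complex \<Rightarrow> int \<times> int \<Rightarrow> complex" where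
  "invariant_series th c = (\<lambda>(k, l). lam th (quad_phase k l) * (if 3 dvd (l - k) then fst c else snd c))"

lemma untwist_invariant_series:
  "untwist th (invariant_series th c) (k, l) = (if 3 dvd (l - k) then fst c else snd c)"
  by (simp add: untwist_def invariant_series_def inverse_lam[symmetric])

lemma inj_invariant_series: "inj (invariant_series th)"
proof (rule injI)
  fix c d assume "invariant_series th c = invariant_series th d"
  then have "untwist th (invariant_series th c) x = untwist th (invariant_series th d) x" for x
    by simp
  from this[of "(0, 0)"] this[of "(0, 1)"] show "c = d"
    by (simp add: untwist_invariant_series prod_eq_iff)
qed

lemma range_invariant_series: "range (invariant_series th) = H0_inv th"
proof (intro equalityI subsetI)
  fix phi assume "phi \<in> range (invariant_series th)"
  then obtain c where "phi = invariant_series th c"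
    by blast
  then show "phi \<in> H0_inv th"
    by (simp add: mem_H0_inv_iff_untwist untwist_invariant_series)
next
  fix phi assume "phi \<in> H0_inv th"
  then have untwist_phi:
    "untwist th phi (k, l) = (if 3 dvd (l - k) then untwist th phi (0, 0) else untwist th phi (0, 1))" for k l
    unfolding mem_H0_inv_iff_untwist by blast
  have "phi (k, l) = invariant_series th (untwist th phi (0, 0), untwist th phi (0, 1)) (k, l)" for k l
    by (subst eq_lam_quad_phase_untwist, subst untwist_phi) (simp add: invariant_series_def)
  then have "phi = invariant_series th (untwist th phi (0, 0), untwist th phi (0, 1))"
    by (simp add: fun_eq_iff)
  then show "phi \<in> range (invariant_series th)"
    by (rule range_eqI)
qed

theorem mainTheorem10:
  fixes \<theta> :: real
  assumes "\<theta> \<notin> \<rat>"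
  shows "\<exists>f :: complex \<times> complex \<Rightarrow> (int \<times> int \<Rightarrow> complex).
           (\<forall>x y. f (fst x + fst y, snd x + snd y) = (\<lambda>i. f x i + f y i)) \<and> (\<forall>c x. f (c * fst x, c * snd x) = (\<lambda>i. c * f x i)) \<and>
           inj f \<and> range f = H0_inv \<theta>"
proof (intro exI[of _ "invariant_series \<theta>"] conjI allI)
  show "invariant_series \<theta> (fst x + fst y, snd x + snd y) = (\<lambda>i. invariant_series \<theta> x i + invariant_series \<theta> y i)"
    for x y
    by (rule ext) (simp add: invariant_series_def distrib_left split: prod.split)
  show "invariant_series \<theta> (c * fst x, c * snd x) = (\<lambda>i. c * invariant_series \<theta> x i)" for c x
    by (rule ext) (simp add: invariant_series_def split: prod.split)
qed (fact inj_invariant_series range_invariant_series)+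

end
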